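(* For every $n\ge2$ and all masses $m_1,\dots,m_n>0$, the $n$-body problem in ${\bf H}^2$ has no fixed points: there is no collisionless configuration ${\bf q}^0\in({\bf H}^2)^n$ such that the constant function ${\bf q}(t)\equiv{\bf q}^0$ solves the equations of motion.
   Context: The $n$-body problem in ${\bf H}^2$ (Weierstrass model): with the Lorentz inner product ${\bf a}\boxdot{\bf b}=a_xb_x+a_yb_y-a_zb_z$ on $\mathbb R^3$, ${\bf H}^2=\{(x,y,z): x^2+y^2-z^2=-1,\ z>0\}$. Bodies of masses $m_1,\dots,m_n>0$ have positions ${\bf q}_i=(x_i,y_i,z_i)\in{\bf H}^2$ and satisfy $$\ddot{\bf q}_i=\sum_{j\ne i}\frac{m_j[{\bf q}_j+({\bf q}_i\boxdot{\bf q}_j){\bf q}_i]}{[({\bf q}_i\boxdot{\bf q}_j)^2-1]^{3/2}}+(\dot{\bf q}_i\boxdot\dot{\bf q}_i){\bf q}_i,\qquad {\bf q}_i\boxdot{\bf q}_i=-1,\ \ {\bf q}_i\boxdot\dot{\bf q}_i=0,$$ $i=1,\dots,n$, defined only for collisionless configurations (${\bf q}_i\ne{\bf q}_j$, equivalently ${\bf q}_i\boxdot{\bf q}_j\ne-1$, for $i\ne j$). These come from the force function $\sum_{i<j}m_im_j\coth d({\bf q}_i,{\bf q}_j)$ with $d$ the hyperbolic distance $\cosh^{-1}(-{\bf q}_i\boxdot{\bf q}_j)$. *)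

theory Defs
  imports "HOL-Analysis.Analysis"
begin

definition lorentz :: "real^3 \<Rightarrow> real^3 \<Rightarrow> real" where
  "lorentz a b = a$1 * b$1 + a$2 * b$2 - a$3 * b$3"

text \<open>The upper sheet of the hyperboloid (Weierstrass model of H^2).\<close>
definition H2 :: "(real^3) set" where
  "H2 = {p. lorentz p p = -1 \<and> p$3 > 0}"

text \<open>Configurations of n bodies: bodies indexed by 0..n-1.\<close>
definition collisionless :: "nat \<Rightarrow> (nat \<Rightarrow> real^3) \<Rightarrow> bool" where
  "collisionless n q \<longleftrightarrow> (\<forall>i<n. \<forall>j<n. i \<noteq> j \<longrightarrow> q i \<noteq> q j)"

definition accel :: "(nat \<Rightarrow> real) \<Rightarrow> nat \<Rightarrow> (nat \<Rightarrow> real^3) \<Rightarrow> (nat \<Rightarrow> real^3) \<Rightarrow> nat \<Rightarrow> real^3" where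
  "accel m n q v i =
     (\<Sum>j\<in>{..<n} - {i}.
        (m j / (((lorentz (q i) (q j))\<^sup>2 - 1) powr (3/2))) *\<^sub>R (q j + lorentz (q i) (q j) *\<^sub>R q i))
     + lorentz (v i) (v i) *\<^sub>R q i"

definition solves :: "(nat \<Rightarrow> real) \<Rightarrow> nat \<Rightarrow> (real \<Rightarrow> nat \<Rightarrow> real^3) \<Rightarrow> bool" where
  "solves m n q \<longleftrightarrow> (\<exists>v :: real \<Rightarrow> nat \<Rightarrow> real^3. \<forall>t. collisionless n (q t) \<and>
      (\<forall>i<n. q t i \<in> H2 \<and> lorentz (q t i) (v t i) = 0 \<and>
        ((\<lambda>s. q s i) has_vector_derivative v t i) (at t) \<and>
        ((\<lambda>s. v s i) has_vector_derivative accel m n (q t) (v t) i) (at t)))"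

end

theory Submission
  imports Defs
begin

text \<open>
  A fixed point has zero velocity, hence zero acceleration, so for
  every body the attracting force (the sum in the equations of motion) vanishes.
  Now look at a body i with the largest height coordinate z.  For every other
  body j the reversed Cauchy-Schwarz inequality on the hyperboloid gives
  q_i \<boxdot> q_j < -1, so the force coefficient is positive and the z-component
  z_j + (q_i \<boxdot> q_j) z_i of the direction vector is below z_j - z_i \<le> 0.
  Hence the z-component of the force on body i is strictly negative, which
  contradicts its vanishing, since n \<ge> 2 guarantees another body.
\<close>

definition force :: "(nat \<Rightarrow> real) \<Rightarrow> nat \<Rightarrow> (nat \<Rightarrow> real^3) \<Rightarrow> nat \<Rightarrow> real^3" where
  "force m n q i =
     (\<Sum>j\<in>{..<n} - {i}.
        (m j / (((lorentz (q i) (q j))\<^sup>2 - 1) powr (3/2))) *\<^sub>R (q j + lorentz (q i) (q j) *\<^sub>R q i))"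

lemma accel_eq_force: "accel m n q v i = force m n q i + lorentz (v i) (v i) *\<^sub>R q i"
  by (simp add: accel_def force_def)

text \<open>Reversed Cauchy-Schwarz in coordinates: for two distinct points of the
  upper sheet x^2 + y^2 - z^2 = -1 one has z1 z2 - x1 x2 - y1 y2 > 1.  The key is
  Lagrange's identity
  (z1 z2)^2 - (1 + x1 x2 + y1 y2)^2 = (x1-x2)^2 + (y1-y2)^2 + (x1 y2 - x2 y1)^2.\<close>
lemma hyperboloid_reversed_cauchy_schwarz:
  fixes x1 y1 z1 x2 y2 z2 :: real
  assumes h1: "x1*x1 + y1*y1 - z1*z1 = -1" and p1: "z1 > 0"
    and h2: "x2*x2 + y2*y2 - z2*z2 = -1" and p2: "z2 > 0"
    and ne: "\<not> (x1 = x2 \<and> y1 = y2 \<and> z1 = z2)"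
  shows "z1*z2 - x1*x2 - y1*y2 > 1"
proof (cases "x1 = x2 \<and> y1 = y2")
  case True
  then have "z1^2 = z2^2" using h1 h2 by (auto simp: power2_eq_square)
  then have "z1 = z2" using p1 p2 power2_eq_imp_eq[of z1 z2] by simp
  then show ?thesis using True ne by auto
next
  case False
  have z1_sq: "z1*z1 = 1 + x1*x1 + y1*y1" and z2_sq: "z2*z2 = 1 + x2*x2 + y2*y2"
    using h1 h2 by linarith+
  have "(z1*z2)^2 = (z1*z1)*(z2*z2)" by (simp add: power2_eq_square)
  also have "\<dots> = (1 + x1*x1 + y1*y1)*(1 + x2*x2 + y2*y2)" using z1_sq z2_sq by simp
  finally have lagrange: "(z1*z2)^2 - (1 + x1*x2 + y1*y2)^2
      = (x1-x2)^2 + (y1-y2)^2 + (x1*y2-x2*y1)^2"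
    by (simp add: power2_eq_square algebra_simps)
  have "(x1-x2)^2 > 0 \<or> (y1-y2)^2 > 0" using False by auto
  then have "(x1-x2)^2 + (y1-y2)^2 + (x1*y2-x2*y1)^2 > 0"
    by (metis add_nonneg_pos add_pos_nonneg zero_le_power2)
  then have "(1 + x1*x2 + y1*y2)^2 < (z1*z2)^2" using lagrange by linarith
  then have "1 + x1*x2 + y1*y2 < z1*z2"
    by (rule power2_less_imp_less) (use p1 p2 in simp)
  then show ?thesis by linarith
qed

lemma lorentz_H2_distinct:
  assumes "u \<in> H2" "w \<in> H2" "u \<noteq> w"
  shows "lorentz u w < -1"
proof -
  have "\<not> (u$1 = w$1 \<and> u$2 = w$2 \<and> u$3 = w$3)"
    using assms(3) by (auto simp: vec_eq_iff forall_3)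
  then have "u$3*w$3 - u$1*w$1 - u$2*w$2 > 1"
    using assms(1,2)
    by (intro hyperboloid_reversed_cauchy_schwarz) (auto simp: H2_def lorentz_def)
  then show ?thesis by (simp add: lorentz_def)
qed

lemma force_term_height_neg:
  assumes "u \<in> H2" "w \<in> H2" "u \<noteq> w" "w$3 \<le> u$3" "\<mu> > 0"
  shows "(\<mu> / (((lorentz u w)\<^sup>2 - 1) powr (3/2))) * (w$3 + lorentz u w * u$3) < 0"
proof -
  have L: "lorentz u w < -1" using lorentz_H2_distinct assms(1-3) by blast
  have "1 < (- lorentz u w) * (- lorentz u w)"
    by (rule less_1_mult) (use L in linarith)+
  then have coeff_pos: "\<mu> / (((lorentz u w)\<^sup>2 - 1) powr (3/2)) > 0"
    using assms(5) by (simp add: power2_eq_square)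
  have "u$3 > 0" using assms(1) by (simp add: H2_def)
  then have "lorentz u w * u$3 < (-1) * u$3" using L by (intro mult_strict_right_mono)
  then have "w$3 + lorentz u w * u$3 < 0" using assms(4) by linarith
  with coeff_pos show ?thesis by (rule mult_pos_neg)
qed

text \<open>At a fixed point the velocities vanish, hence so do the accelerations,
  and therefore every body feels zero force.\<close>
lemma fixed_point_force_zero:
  assumes "solves m n (\<lambda>t. q0)" "i < n"
  shows "force m n q0 i = 0"
proof -
  from assms(1) obtain v :: "real \<Rightarrow> nat \<Rightarrow> real^3" where V: "\<forall>t. \<forall>i<n.
        ((\<lambda>s. q0 i) has_vector_derivative v t i) (at t) \<and>
        ((\<lambda>s. v s i) has_vector_derivative accel m n q0 (v t) i) (at t)"
    unfolding solves_def by blast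
  have v_zero: "v t i = 0" for t
    using vector_derivative_unique_at[OF _ has_vector_derivative_const] V assms(2) by blast
  then have "(\<lambda>s. v s i) = (\<lambda>s. 0)" by auto
  then have "((\<lambda>s. 0) has_vector_derivative accel m n q0 (v 0) i) (at 0)"
    using V assms(2) by metis
  then have "accel m n q0 (v 0) i = 0"
    using vector_derivative_unique_at[OF _ has_vector_derivative_const] by blast
  then show ?thesis using v_zero by (simp add: accel_eq_force lorentz_def)
qed

lemma exists_maximizer:
  fixes f :: "nat \<Rightarrow> 'a::linorder"
  assumes "n > 0"
  obtains i where "i < n" "\<And>j. j < n \<Longrightarrow> f j \<le> f i"
proof -
  define M where "M = Max (f ` {..<n})"
  have "M \<in> f ` {..<n}"
    unfolding M_def using assms by (intro Max_in) auto
  then obtain i where "i < n" "f i = M" by auto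
  then show ?thesis by (intro that) (auto simp: M_def)
qed

lemma highest_body_force_height_neg:
  assumes "n \<ge> 2" "\<forall>j<n. m j > 0" "\<forall>j<n. q j \<in> H2" "collisionless n q"
    and "i < n" "\<And>j. j < n \<Longrightarrow> q j $ 3 \<le> q i $ 3"
  shows "force m n q i $ 3 < 0"
proof -
  have "(if i = 0 then 1 else 0) \<in> {..<n} - {i}" using assms(1) by auto
  then have others: "{..<n} - {i} \<noteq> {}" by blast
  have "force m n q i $ 3 = (\<Sum>j\<in>{..<n} - {i}.
      (m j / (((lorentz (q i) (q j))\<^sup>2 - 1) powr (3/2))) * (q j $ 3 + lorentz (q i) (q j) * q i $ 3))"
    by (simp add: force_def)
  also have "\<dots> < (\<Sum>j\<in>{..<n} - {i}. 0)"
  proof (rule sum_strict_mono[OF _ others])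
    fix j assume "j \<in> {..<n} - {i}"
    then have "j < n" "j \<noteq> i" by auto
    then show "(m j / (((lorentz (q i) (q j))\<^sup>2 - 1) powr (3/2))) *
               (q j $ 3 + lorentz (q i) (q j) * q i $ 3) < 0"
      using assms by (intro force_term_height_neg) (auto simp: collisionless_def)
  qed simp
  finally show ?thesis by simp
qed

theorem mainTheorem12:
  fixes n :: nat and m :: "nat \<Rightarrow> real"
  assumes "n \<ge> 2"
    and "\<forall>i<n. m i > 0"
  shows "\<not> (\<exists>q0 :: nat \<Rightarrow> real^3. (\<forall>i<n. q0 i \<in> H2) \<and> collisionless n q0 \<and>
              solves m n (\<lambda>t. q0))"
proof
  assume "\<exists>q0 :: nat \<Rightarrow> real^3. (\<forall>i<n. q0 i \<in> H2) \<and> collisionless n q0 \<and>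
              solves m n (\<lambda>t. q0)"
  then obtain q0 :: "nat \<Rightarrow> real^3" where H: "\<forall>i<n. q0 i \<in> H2"
    and C: "collisionless n q0" and S: "solves m n (\<lambda>t. q0)" by blast
  obtain i where i: "i < n" and highest: "\<And>j. j < n \<Longrightarrow> q0 j $ 3 \<le> q0 i $ 3"
    using exists_maximizer[of n "\<lambda>j. q0 j $ 3"] assms(1) by auto
  have "force m n q0 i $ 3 < 0"
    using highest_body_force_height_neg[OF assms H C i highest] .
  moreover have "force m n q0 i = 0" using fixed_point_force_zero[OF S i] .
  ultimately show False by simp
qed

end
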